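(* Let $\lambda\approx1.5214$ be the real root of $t^3-t-2$. Define a weight on monomials (compositions in $\operatorname{End}\Lambda$) in the letters $x_i,v_i$ by $\mathrm{wt}(v_i)=\lambda^i$, $\mathrm{wt}(x_i)=-\lambda^i$, extended additively over the letters of a monomial. Then for every tail monomial $r_{n-3}$ and every $n\ge 0$, $$1.3\,\lambda^{n-5}<\mathrm{wt}(r_{n-3}v_n)\le\lambda^n,$$ and for every tail monomial $r_{n-5}$ and every $n\ge2$, $$1.1\,\lambda^{n-4}<\mathrm{wt}(r_{n-5}x_{n-2}v_n)\le 2\lambda^{n-3}.$$
   Context: $\Lambda$ is the Grassmann algebra on odd generators $x_0,x_1,\dots$, $x_i$ acting by left multiplication; $v_i=\sum_{k\ge0}\big(\prod_{n=0}^{k-1}x_{i+3n}x_{i+3n+1}\big)\partial_{i+3k}$ where $\partial_i$ is the superderivation with $\partial_i(x_j)=\delta_{ij}$. A tail monomial is $r_m=x_0^{\xi_0}\cdots x_m^{\xi_m}$, $\xi_i\in\{0,1\}$, with $r_m=1$ for $m<0$ (weight $0$). *)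

theory Defs
  imports Complex_Main
begin

text \<open>lambda: the real root of t^3 - t - 2 (it is the unique real root).\<close>
definition lam :: real where
  "lam = (THE t::real. t ^ 3 - t - 2 = 0)"

text \<open>Letters of monomials in End Lambda: x_i (left multiplication) and v_i.\<close>
datatype letter = X nat | V nat

type_synonym monomial = "letter list"

fun wt_letter :: "letter \<Rightarrow> real" where
  "wt_letter (V i) = lam ^ i"
| "wt_letter (X i) = - (lam ^ i)"

definition wt :: "monomial \<Rightarrow> real" where
  "wt w = (\<Sum>l\<leftarrow>w. wt_letter l)"

text \<open>Tail monomial r_m = x_0^{xi_0} ... x_m^{xi_m}; empty word (= 1) if m < 0.\<close>
definition tail :: "(nat \<Rightarrow> bool) \<Rightarrow> int \<Rightarrow> monomial" where
  "tail \<xi> m = map X (filter \<xi> [0..<nat (m + 1)])"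

end

theory Submission
  imports Defs
begin

text \<open>The weight of a tail monomial is minus a sum of distinct powers \<open>\<lambda>\<^sup>i\<close> with \<open>i \<le> m\<close>;
since \<open>\<lambda> > 1\<close> this lies strictly between \<open>-\<lambda>\<^sup>m\<^sup>+\<^sup>1/(\<lambda>-1)\<close> and \<open>0\<close>. Factoring out the leading
power, both claims reduce to two numerical inequalities for \<open>\<lambda>\<close>, which follow from
\<open>\<lambda>\<^sup>3 = \<lambda> + 2\<close> and \<open>1.52 < \<lambda> < 1.53\<close>.\<close>

lemma cubic_root_compare:
  fixes t a :: real
  assumes root: "t ^ 3 - t - 2 = 0" and "a \<ge> 6/5"
  shows "a < t \<longleftrightarrow> a ^ 3 - a - 2 < 0"
proof -
  define q where "q = (t + a/2)\<^sup>2 + 3/4 * a\<^sup>2 - 1"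
  have "36/25 \<le> a\<^sup>2"
    using power_mono[of "6/5" a 2] \<open>a \<ge> 6/5\<close> by (simp add: power2_eq_square)
  then have "q > 0"
    unfolding q_def using zero_le_power2[of "t + a/2"] by linarith
  have "(t - a) * q = t ^ 3 - t - 2 - (a ^ 3 - a - 2)"
    unfolding q_def by (simp add: power2_eq_square power3_eq_cube algebra_simps)
  then have "(t - a) * q = - (a ^ 3 - a - 2)" using root by simp
  moreover have "a < t \<longleftrightarrow> 0 < (t - a) * q"
    using \<open>q > 0\<close> by (simp add: zero_less_mult_iff)
  ultimately show ?thesis by simp
qed

lemma cubic_root_bounds:
  fixes t :: real
  assumes "t ^ 3 - t - 2 = 0"
  shows "1.52 < t" and "t < 1.53"
proof -
  show "1.52 < t"
    using cubic_root_compare[OF assms, of "1.52"] by (simp add: power3_eq_cube)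
  have "\<not> 1.53 < t"
    using cubic_root_compare[OF assms, of "1.53"] by (simp add: power3_eq_cube)
  moreover have "t \<noteq> 1.53"
  proof
    assume "t = 1.53"
    with assms show False by (simp add: power3_eq_cube)
  qed
  ultimately show "t < 1.53" by simp
qed

lemma cubic_root_unique:
  fixes s t :: real
  assumes "s ^ 3 - s - 2 = 0" and "t ^ 3 - t - 2 = 0"
  shows "s = t"
proof -
  have "\<not> s < t"
    using cubic_root_compare[OF assms(2), of s] cubic_root_bounds[OF assms(1)] assms(1) by simp
  moreover have "\<not> t < s"
    using cubic_root_compare[OF assms(1), of t] cubic_root_bounds[OF assms(2)] assms(2) by simp
  ultimately show ?thesis by simp
qed

lemma cubic_root_exists: "\<exists>t::real. t ^ 3 - t - 2 = 0"
proof -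
  have "\<exists>t\<ge>1. t \<le> 2 \<and> (\<lambda>t::real. t ^ 3 - t - 2) t = 0"
    by (rule IVT') (auto intro!: continuous_intros)
  then show ?thesis by blast
qed

lemma lam_root: "lam ^ 3 - lam - 2 = 0"
proof -
  have "\<exists>!t::real. t ^ 3 - t - 2 = 0"
    using cubic_root_exists cubic_root_unique by blast
  then show ?thesis
    unfolding lam_def by (rule theI')
qed

lemma lam_cube: "lam ^ 3 = lam + 2"
  using lam_root by simp

lemma lam_gt: "1.52 < lam" and lam_lt: "lam < 1.53"
  using cubic_root_bounds[OF lam_root] by auto

lemma lam_pos: "0 < lam"
  using lam_gt by simp

lemma lam_powi_add_nat: "lam powi (k + int j) = lam powi k * lam ^ j"
  using lam_pos by (simp add: power_int_add)

lemma sum_selected_powers_less: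
  fixes x :: real
  assumes "1 < x"
  shows "(\<Sum>i<k. if P i then x ^ i else 0) < x ^ k / (x - 1)"
proof -
  have "(\<Sum>i<k. if P i then x ^ i else 0) \<le> (\<Sum>i<k. x ^ i)"
    using assms by (intro sum_mono) auto
  also have "\<dots> = (x ^ k - 1) / (x - 1)"
    using assms by (simp add: geometric_sum)
  also have "\<dots> < x ^ k / (x - 1)"
    using assms by (simp add: divide_strict_right_mono)
  finally show ?thesis .
qed

lemma wt_append: "wt (u @ w) = wt u + wt w"
  by (simp add: wt_def)

lemma wt_tail: "wt (tail \<xi> m) = - (\<Sum>i<nat (m + 1). if \<xi> i then lam ^ i else 0)"
proof -
  have "wt (map X (filter \<xi> [0..<k])) = - (\<Sum>i<k. if \<xi> i then lam ^ i else 0)" for k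
    by (induction k) (auto simp: wt_def)
  then show ?thesis unfolding tail_def .
qed

lemma wt_tail_nonpos: "wt (tail \<xi> m) \<le> 0"
  using lam_pos by (simp add: wt_tail sum_nonneg)

lemma wt_tail_gt: "- (lam powi (m + 1) / (lam - 1)) < wt (tail \<xi> m)"
proof (cases "0 \<le> m + 1")
  case True
  then have "lam powi (m + 1) = lam ^ nat (m + 1)"
    by (metis nat_0_le power_int_of_nat)
  then show ?thesis
    using sum_selected_powers_less[of lam] lam_gt by (simp add: wt_tail)
next
  case False
  then show ?thesis using lam_gt by (simp add: wt_tail)
qed

lemma lam_cube_over_pred_less: "lam ^ 3 / (lam - 1) < lam ^ 5 - 1.3"
proof -
  have "lam ^ 5 = lam\<^sup>2 * lam ^ 3"
    by (simp add: power_add[symmetric])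
  then have pow5: "lam ^ 5 = 2 * lam\<^sup>2 + lam + 2"
    using lam_cube by (simp add: power2_eq_square power3_eq_cube algebra_simps)
  have "lam\<^sup>2 < 1.53 * lam"
    using lam_lt lam_pos by (simp add: power2_eq_square)
  moreover have "(lam ^ 5 - 1.3) * (lam - 1) = 2 * lam ^ 3 - lam\<^sup>2 - 0.3 * lam - 0.7"
    unfolding pow5 by (simp add: power2_eq_square power3_eq_cube field_simps)
  ultimately have "lam ^ 3 < (lam ^ 5 - 1.3) * (lam - 1)"
    using lam_cube lam_lt by simp
  then show ?thesis
    using lam_gt by (simp add: pos_divide_less_eq)
qed

lemma one_over_lam_pred_less: "1 / (lam - 1) < 2 * lam - 1.1"
proof -
  have "1.52 * lam < lam\<^sup>2"
    using lam_gt lam_pos by (simp add: power2_eq_square)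
  moreover have "(2 * lam - 1.1) * (lam - 1) = 2 * lam\<^sup>2 - 3.1 * lam + 1.1"
    by (simp add: power2_eq_square field_simps)
  ultimately have "1 < (2 * lam - 1.1) * (lam - 1)"
    using lam_lt by simp
  then show ?thesis
    using lam_gt by (simp add: pos_divide_less_eq)
qed

lemma wt_tail_V_bounds:
  "1.3 * lam powi (int n - 5) < wt (tail \<xi> (int n - 3) @ [V n])
   \<and> wt (tail \<xi> (int n - 3) @ [V n]) \<le> lam ^ n"
proof -
  define p where "p = lam powi (int n - 5)"
  have "0 < p" using lam_pos by (simp add: p_def)
  have wt_eq: "wt (tail \<xi> (int n - 3) @ [V n]) = wt (tail \<xi> (int n - 3)) + lam ^ n"
    by (simp add: wt_append wt_def)
  have "lam ^ n = p * lam ^ 5"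
    using lam_powi_add_nat[of "int n - 5" 5] by (simp add: p_def)
  moreover have "lam powi (int n - 3 + 1) = p * lam ^ 3"
    using lam_powi_add_nat[of "int n - 5" 3] by (simp add: p_def)
  moreover have "1.3 * p < p * (lam ^ 5 - lam ^ 3 / (lam - 1))"
    using lam_cube_over_pred_less \<open>0 < p\<close> by simp
  ultimately have "1.3 * p < lam ^ n - lam powi (int n - 3 + 1) / (lam - 1)"
    by (simp add: algebra_simps)
  then show ?thesis
    using wt_eq wt_tail_gt[of "int n - 3" \<xi>] wt_tail_nonpos[of \<xi> "int n - 3"]
    unfolding p_def by linarith
qed

lemma wt_tail_XV_bounds:
  assumes "2 \<le> n"
  shows "1.1 * lam powi (int n - 4) < wt (tail \<xi> (int n - 5) @ [X (n - 2), V n])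
    \<and> wt (tail \<xi> (int n - 5) @ [X (n - 2), V n]) \<le> 2 * lam powi (int n - 3)"
proof -
  define p where "p = lam powi (int n - 4)"
  have "0 < p" using lam_pos by (simp add: p_def)
  have "lam ^ n = p * lam ^ 4"
    using lam_powi_add_nat[of "int n - 4" 4] by (simp add: p_def)
  moreover have "lam ^ (n - 2) = p * lam\<^sup>2"
  proof -
    have "lam ^ (n - 2) = lam powi (int n - 4 + int 2)"
      using assms by (simp flip: power_int_of_nat add: of_nat_diff)
    then show ?thesis
      unfolding p_def lam_powi_add_nat .
  qed
  moreover have "lam ^ 4 - lam\<^sup>2 = 2 * lam"
  proof -
    have "lam ^ 4 = lam * lam ^ 3" by (simp add: eval_nat_numeral)
    then show ?thesis using lam_cube by (simp add: power2_eq_square algebra_simps)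
  qed
  ultimately have wt_eq: "wt (tail \<xi> (int n - 5) @ [X (n - 2), V n]) = wt (tail \<xi> (int n - 5)) + 2 * lam * p"
    by (simp add: wt_append wt_def algebra_simps)
  have "lam powi (int n - 3) = p * lam"
    using lam_powi_add_nat[of "int n - 4" 1] by (simp add: p_def)
  moreover have "lam powi (int n - 5 + 1) = p"
    by (simp add: p_def)
  moreover have "1.1 * p < p * (2 * lam - 1 / (lam - 1))"
    using one_over_lam_pred_less \<open>0 < p\<close> by simp
  ultimately show ?thesis
    using wt_eq wt_tail_gt[of "int n - 5" \<xi>] wt_tail_nonpos[of \<xi>]
    by (simp add: p_def algebra_simps)
qed

theorem lemma8p1:
  shows "(\<forall>(n::nat) (\<xi>::nat \<Rightarrow> bool).
            1.3 * lam powi (int n - 5) < wt (tail \<xi> (int n - 3) @ [V n])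
          \<and> wt (tail \<xi> (int n - 3) @ [V n]) \<le> lam ^ n)
       \<and> (\<forall>(n::nat) (\<xi>::nat \<Rightarrow> bool). n \<ge> 2 \<longrightarrow>
            1.1 * lam powi (int n - 4) < wt (tail \<xi> (int n - 5) @ [X (n - 2), V n])
          \<and> wt (tail \<xi> (int n - 5) @ [X (n - 2), V n]) \<le> 2 * lam powi (int n - 3))"
  using wt_tail_V_bounds wt_tail_XV_bounds by blast

end
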